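(* Let $SG=(G,\sigma)$ be a signed graph with a total order on $E(G)$. If $z\in C^i(G)$ satisfies $f_b(z)=0$, then $f_b(d(z))=0$. Consequently $d_b:C^i_b(SG)\to C^{i+1}_b(SG)$ satisfies $d_b\circ f_b=f_b\circ d$ and $d_b\circ d_b=0$.
   Context: Signed graphs: $SG=(G,\sigma)$, $G$ finite (loops, multiple edges allowed), $\sigma:E(G)\to\{\pm1\}$. Negative circuit: product of edge signs $-1$; balanced = no negative circuit. $[G:s]$, $[SG:s]$: spanning subgraph with edge set $s$. Fix a total order on $E(G)$. An enhanced state of $G$ is $S=(s,c)$, $c$ labels each component of $[G:s]$ by $1$ or $x$; $C^i(G)$ is free on enhanced states with $|s|=i$. With $m(1,1)=1$, $m(1,x)=m(x,1)=x$, $m(x,x)=0$: for $e\notin s$, $S_e=(s\cup\{e\},c_e)$ where a component containing both ends of $e$ keeps its label and if $e$ joins components $E_i,E_j$ the merged one gets $m(c(E_i),c(E_j))$ ($S_e=0$ if both are $x$). $d(S)=\sum_{e\notin s}(-1)^{n(e)}S_e$, $n(e)$ = number of edges of $s$ preceding $e$; it is known that $d\circ d=0$. $C^i_b(SG)\subseteq C^i(G)$ is spanned by enhanced states with $[SG:s]$ balanced; $f_b:C^i(G)\to C^i_b(SG)$ is the linear projection sending an enhanced state to itself if $[SG:s]$ is balanced and to $0$ otherwise; $d_b(S):=f_b(d(S))$. *)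

theory Defs
  imports Main
begin

text \<open>A finite graph (loops and multiple edges allowed) is given by a vertex set V,
an edge set E and an endpoint map ends :: 'e => 'v * 'v. A signed graph adds
sigma :: 'e => int with values in {1,-1}. The total order on E(G) is a strict
linear order lo (a relation) on E.\<close>

definition adj :: "('e \<Rightarrow> 'v \<times> 'v) \<Rightarrow> 'e set \<Rightarrow> ('v \<times> 'v) set" where
  "adj ends s = {(u, w). \<exists>e\<in>s. ends e = (u, w) \<or> ends e = (w, u)}"

definition comp_of :: "'v set \<Rightarrow> ('e \<Rightarrow> 'v \<times> 'v) \<Rightarrow> 'e set \<Rightarrow> 'v \<Rightarrow> 'v set" where
  "comp_of V ends s v = {w \<in> V. (v, w) \<in> (adj ends s)\<^sup>*}"

definition comps :: "'v set \<Rightarrow> ('e \<Rightarrow> 'v \<times> 'v) \<Rightarrow> 'e set \<Rightarrow> 'v set set" where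
  "comps V ends s = comp_of V ends s ` V"

text \<open>Enhanced states (s, c): label x is encoded by True, label 1 by False;
c is False outside the components of [G:s] (canonical representative).\<close>
type_synonym ('e, 'v) estate = "'e set \<times> ('v set \<Rightarrow> bool)"

definition enh_states :: "'v set \<Rightarrow> 'e set \<Rightarrow> ('e \<Rightarrow> 'v \<times> 'v) \<Rightarrow> ('e, 'v) estate set" where
  "enh_states V E ends = {(s, c). s \<subseteq> E \<and> (\<forall>K. K \<notin> comps V ends s \<longrightarrow> \<not> c K)}"

text \<open>S_e is zero iff e joins two distinct components both labelled x.\<close>
definition killed :: "'v set \<Rightarrow> ('e \<Rightarrow> 'v \<times> 'v) \<Rightarrow> 'e set \<Rightarrow> ('v set \<Rightarrow> bool) \<Rightarrow> 'e \<Rightarrow> bool" where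
  "killed V ends s c e =
     (comp_of V ends s (fst (ends e)) \<noteq> comp_of V ends s (snd (ends e))
      \<and> c (comp_of V ends s (fst (ends e))) \<and> c (comp_of V ends s (snd (ends e))))"

text \<open>The labelling c_e of [G : s \<union> {e}]: unchanged components keep their label,
a merged component gets m(c(E_i), c(E_j)) (here: disjunction, the case x,x being killed).\<close>
definition merged_label :: "'v set \<Rightarrow> ('e \<Rightarrow> 'v \<times> 'v) \<Rightarrow> 'e set \<Rightarrow> ('v set \<Rightarrow> bool) \<Rightarrow> 'e \<Rightarrow> 'v set \<Rightarrow> bool" where
  "merged_label V ends s c e = (\<lambda>K.
     if K \<in> comps V ends (insert e s) then
       (if K \<in> comps V ends s then c K
        else (c (comp_of V ends s (fst (ends e))) \<or> c (comp_of V ends s (snd (ends e)))))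
     else False)"

definition edge_pos :: "('e \<times> 'e) set \<Rightarrow> 'e set \<Rightarrow> 'e \<Rightarrow> nat" where
  "edge_pos lo s e = card {e' \<in> s. (e', e) \<in> lo}"

definition dstate :: "'v set \<Rightarrow> 'e set \<Rightarrow> ('e \<Rightarrow> 'v \<times> 'v) \<Rightarrow> ('e \<times> 'e) set
    \<Rightarrow> ('e, 'v) estate \<Rightarrow> ('e, 'v) estate \<Rightarrow> int" where
  "dstate V E ends lo S T = (case S of (s, c) \<Rightarrow>
     (\<Sum>e\<in>E - s. if \<not> killed V ends s c e \<and> T = (insert e s, merged_label V ends s c e)
                 then (-1) ^ edge_pos lo s e else 0))"

text \<open>Chains are integer-valued functions on enhanced states (finite support in the
set of enhanced states); C^i(G) is the free abelian group on enhanced states with |s| = i.\<close>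
definition C_grp :: "'v set \<Rightarrow> 'e set \<Rightarrow> ('e \<Rightarrow> 'v \<times> 'v) \<Rightarrow> nat \<Rightarrow> (('e, 'v) estate \<Rightarrow> int) set" where
  "C_grp V E ends i = {z. \<forall>S. z S \<noteq> 0 \<longrightarrow> S \<in> enh_states V E ends \<and> card (fst S) = i}"

definition dmap :: "'v set \<Rightarrow> 'e set \<Rightarrow> ('e \<Rightarrow> 'v \<times> 'v) \<Rightarrow> ('e \<times> 'e) set
    \<Rightarrow> (('e, 'v) estate \<Rightarrow> int) \<Rightarrow> (('e, 'v) estate \<Rightarrow> int)" where
  "dmap V E ends lo z = (\<lambda>T. \<Sum>S\<in>enh_states V E ends. z S * dstate V E ends lo S T)"

text \<open>Circuits: edge sets of cycles (loops are circuits of length 1, a pair of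
parallel edges a circuit of length 2).\<close>
definition is_circuit :: "('e \<Rightarrow> 'v \<times> 'v) \<Rightarrow> 'e set \<Rightarrow> bool" where
  "is_circuit ends F = (\<exists>es vs. length es = length vs \<and> es \<noteq> [] \<and> distinct es \<and> distinct vs
     \<and> set es = F
     \<and> (\<forall>j < length es. ends (es ! j) = (vs ! j, vs ! ((j + 1) mod length es))
                      \<or> ends (es ! j) = (vs ! ((j + 1) mod length es), vs ! j)))"

definition balanced :: "('e \<Rightarrow> 'v \<times> 'v) \<Rightarrow> ('e \<Rightarrow> int) \<Rightarrow> 'e set \<Rightarrow> bool" where
  "balanced ends \<sigma> s = (\<forall>F. F \<subseteq> s \<longrightarrow> is_circuit ends F \<longrightarrow> (\<Prod>e\<in>F. \<sigma> e) \<noteq> -1)"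

definition fb :: "('e \<Rightarrow> 'v \<times> 'v) \<Rightarrow> ('e \<Rightarrow> int) \<Rightarrow> (('e, 'v) estate \<Rightarrow> int) \<Rightarrow> (('e, 'v) estate \<Rightarrow> int)" where
  "fb ends \<sigma> z = (\<lambda>S. if balanced ends \<sigma> (fst S) then z S else 0)"

definition Cb_grp :: "'v set \<Rightarrow> 'e set \<Rightarrow> ('e \<Rightarrow> 'v \<times> 'v) \<Rightarrow> ('e \<Rightarrow> int) \<Rightarrow> nat
    \<Rightarrow> (('e, 'v) estate \<Rightarrow> int) set" where
  "Cb_grp V E ends \<sigma> i = {z \<in> C_grp V E ends i. \<forall>S. z S \<noteq> 0 \<longrightarrow> balanced ends \<sigma> (fst S)}"

definition db :: "'v set \<Rightarrow> 'e set \<Rightarrow> ('e \<Rightarrow> 'v \<times> 'v) \<Rightarrow> ('e \<Rightarrow> int) \<Rightarrow> ('e \<times> 'e) set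
    \<Rightarrow> (('e, 'v) estate \<Rightarrow> int) \<Rightarrow> (('e, 'v) estate \<Rightarrow> int)" where
  "db V E ends \<sigma> lo z = fb ends \<sigma> (dmap V E ends lo z)"

end

theory Submission
  imports Defs
begin

text \<open>Adding an edge [e] and then an edge [f] to an enhanced state [(s, c)] gives a result
that depends only on [t = s \<union> {e, f}]: a component of [[G:t]] is labelled x iff it contains
an x-labelled component of [[G:s]] (push_label), and the state is zero iff some component of
[[G:t]] contains two distinct x-labelled components of [[G:s]] (merges_labelled). Since
exactly one of [e], [f] precedes the other, the two orders contribute opposite signs, so the
coefficients of [d (d S)] cancel in pairs. As [d] only adds edges and subsets of balanced edge
sets are balanced, [f_b (d z)] only depends on [f_b z]; this gives [d_b \<circ> f_b = f_b \<circ> d]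
and then [d_b \<circ> d_b = f_b \<circ> d \<circ> d = 0].\<close>

lemma sym_adj: "sym (adj ends s)"
  by (auto simp: adj_def sym_def)

lemma adj_rtrancl_sym: "(u, w) \<in> (adj ends s)\<^sup>* \<Longrightarrow> (w, u) \<in> (adj ends s)\<^sup>*"
  by (metis sym_rtrancl[OF sym_adj] symD)

lemma adj_mono: "s \<subseteq> t \<Longrightarrow> adj ends s \<subseteq> adj ends t"
  by (auto simp: adj_def)

lemma adj_insert: "ends e = (a, b) \<Longrightarrow> adj ends (insert e s) = adj ends s \<union> {(a, b), (b, a)}"
  by (auto simp: adj_def)

lemma rtrancl_adj_insert_iff:
  assumes "ends e = (a, b)"
  shows "(v, w) \<in> (adj ends (insert e s))\<^sup>* \<longleftrightarrow> (v, w) \<in> (adj ends s)\<^sup>*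
    \<or> (v, a) \<in> (adj ends s)\<^sup>* \<and> (b, w) \<in> (adj ends s)\<^sup>*
    \<or> (v, b) \<in> (adj ends s)\<^sup>* \<and> (a, w) \<in> (adj ends s)\<^sup>*"
    (is "_ \<longleftrightarrow> ?P v w")
proof
  let ?R = "adj ends s"
  assume "(v, w) \<in> (adj ends (insert e s))\<^sup>*"
  then have "(v, w) \<in> (?R \<union> {(a, b), (b, a)})\<^sup>*"
    by (simp add: adj_insert[of ends e a b, OF assms])
  then show "?P v w"
  proof (induction rule: rtrancl_induct)
    case (step y z)
    from step(2) consider "(y, z) \<in> ?R" | "(y, z) = (a, b)" | "(y, z) = (b, a)"
      by blast
    then show ?case
    proof cases
      case 1
      then show ?thesis using step(3) by (meson rtrancl_into_rtrancl)
    next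
      case 2
      then show ?thesis
        using step(3) adj_rtrancl_sym[of b a ends s] rtrancl_trans[of v a ?R b] by auto
    next
      case 3
      then show ?thesis
        using step(3) adj_rtrancl_sym[of a b ends s] rtrancl_trans[of v b ?R a] by auto
    qed
  qed simp
next
  let ?R' = "adj ends (insert e s)"
  have "adj ends s \<subseteq> ?R'" "(a, b) \<in> ?R'" "(b, a) \<in> ?R'"
    using assms by (auto simp: adj_def)
  then show "?P v w \<Longrightarrow> (v, w) \<in> ?R'\<^sup>*"
    by (meson r_into_rtrancl rtrancl_mono rtrancl_trans subsetD)
qed

lemma comp_of_subset: "comp_of V ends s v \<subseteq> V"
  by (auto simp: comp_of_def)

lemma in_comp_of_self: "v \<in> V \<Longrightarrow> v \<in> comp_of V ends s v"
  by (auto simp: comp_of_def)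

lemma comp_of_eq: "x \<in> comp_of V ends s v \<Longrightarrow> comp_of V ends s x = comp_of V ends s v"
  unfolding comp_of_def by (blast dest: adj_rtrancl_sym intro: rtrancl_trans)

lemma comp_of_eq_iff:
  assumes "w \<in> V"
  shows "comp_of V ends s v = comp_of V ends s w \<longleftrightarrow> (v, w) \<in> (adj ends s)\<^sup>*"
proof
  assume "comp_of V ends s v = comp_of V ends s w"
  then have "w \<in> comp_of V ends s v"
    using in_comp_of_self[OF assms] by simp
  then show "(v, w) \<in> (adj ends s)\<^sup>*"
    by (simp add: comp_of_def)
next
  assume "(v, w) \<in> (adj ends s)\<^sup>*"
  then have "w \<in> comp_of V ends s v"
    using assms by (simp add: comp_of_def)
  then show "comp_of V ends s v = comp_of V ends s w"
    by (rule comp_of_eq[symmetric])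
qed

lemma comp_of_eq_comps:
  assumes "K \<in> comps V ends s" "w \<in> K"
  shows "comp_of V ends s w = K"
proof -
  from assms obtain v where "K = comp_of V ends s v" "w \<in> comp_of V ends s v"
    by (auto simp: comps_def)
  then show ?thesis
    by (simp add: comp_of_eq)
qed

lemma comps_subset: "K \<in> comps V ends s \<Longrightarrow> K \<subseteq> V"
  by (auto simp: comps_def comp_of_def)

lemma comp_of_mono: "s \<subseteq> t \<Longrightarrow> comp_of V ends s v \<subseteq> comp_of V ends t v"
  unfolding comp_of_def using rtrancl_mono[OF adj_mono] by blast

lemma comp_of_superset_eq:
  "s \<subseteq> t \<Longrightarrow> x \<in> comp_of V ends s v \<Longrightarrow> comp_of V ends t x = comp_of V ends t v"
  by (meson comp_of_eq comp_of_mono subsetD)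

lemma comp_of_coarsen:
  "s \<subseteq> t \<Longrightarrow> w \<in> V \<Longrightarrow> comp_of V ends s v = comp_of V ends s w \<Longrightarrow>
    comp_of V ends t v = comp_of V ends t w"
  by (metis comp_of_superset_eq in_comp_of_self)

lemma bex_comp_of:
  "v \<in> V \<Longrightarrow> (\<exists>w\<in>comp_of V ends s v. P (comp_of V ends s w)) \<longleftrightarrow> P (comp_of V ends s v)"
  using comp_of_eq in_comp_of_self by fastforce

lemma comp_of_insert:
  assumes "ends e = (a, b)" "a \<in> V" "b \<in> V"
  shows "comp_of V ends (insert e s) v =
    (if a \<in> comp_of V ends s v \<or> b \<in> comp_of V ends s v
     then comp_of V ends s a \<union> comp_of V ends s b else comp_of V ends s v)"
proof -
  let ?R = "(adj ends s)\<^sup>*"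
  have "(v, w) \<in> (adj ends (insert e s))\<^sup>* \<longleftrightarrow>
      (if (v, a) \<in> ?R \<or> (v, b) \<in> ?R then (a, w) \<in> ?R \<or> (b, w) \<in> ?R else (v, w) \<in> ?R)"
    for w
    unfolding rtrancl_adj_insert_iff[of ends e a b, OF assms(1)]
    by (meson adj_rtrancl_sym rtrancl_trans)
  then show ?thesis
    using assms(2,3) by (auto simp: comp_of_def)
qed

definition push_label :: "'v set \<Rightarrow> ('e \<Rightarrow> 'v \<times> 'v) \<Rightarrow> 'e set \<Rightarrow> ('v set \<Rightarrow> bool)
    \<Rightarrow> 'e set \<Rightarrow> 'v set \<Rightarrow> bool"
  where "push_label V ends s c t K \<longleftrightarrow> K \<in> comps V ends t \<and> (\<exists>w\<in>K. c (comp_of V ends s w))"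

definition merges_labelled :: "'v set \<Rightarrow> ('e \<Rightarrow> 'v \<times> 'v) \<Rightarrow> 'e set \<Rightarrow> ('v set \<Rightarrow> bool)
    \<Rightarrow> 'e set \<Rightarrow> bool"
  where "merges_labelled V ends s c t \<longleftrightarrow>
    (\<exists>v\<in>V. \<exists>w\<in>V. comp_of V ends t v = comp_of V ends t w
    \<and> comp_of V ends s v \<noteq> comp_of V ends s w \<and> c (comp_of V ends s v) \<and> c (comp_of V ends s w))"

lemma push_label_comp_of:
  "x \<in> V \<Longrightarrow> push_label V ends s c t (comp_of V ends t x) \<longleftrightarrow>
    (\<exists>w\<in>comp_of V ends t x. c (comp_of V ends s w))"
  by (auto simp: push_label_def comps_def)

lemma merged_label_eq_push_label:
  assumes "fst (ends e) \<in> V" "snd (ends e) \<in> V"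
  shows "merged_label V ends s c e = push_label V ends s c (insert e s)"
proof
  fix K
  obtain a b where ab: "ends e = (a, b)" by (cases "ends e")
  with assms have aV: "a \<in> V" and bV: "b \<in> V" by simp_all
  show "merged_label V ends s c e K = push_label V ends s c (insert e s) K"
  proof (cases "K \<in> comps V ends (insert e s)")
    case False
    then show ?thesis by (simp add: merged_label_def push_label_def)
  next
    case K_comp: True
    show ?thesis
    proof (cases "K \<in> comps V ends s")
      case True
      then obtain v where "v \<in> V" "K = comp_of V ends s v" by (auto simp: comps_def)
      then have "(\<exists>w\<in>K. c (comp_of V ends s w)) \<longleftrightarrow> c K"
        using bex_comp_of by metis
      then show ?thesis using True K_comp by (simp add: merged_label_def push_label_def)
    next
      case False
      obtain v where "v \<in> V" and K: "K = comp_of V ends (insert e s) v"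
        using K_comp by (auto simp: comps_def)
      have "a \<in> comp_of V ends s v \<or> b \<in> comp_of V ends s v"
        using False K \<open>v \<in> V\<close> comp_of_insert[where ends=ends and e=e, OF ab aV bV, of s v]
        by (auto simp: comps_def)
      then have "K = comp_of V ends s a \<union> comp_of V ends s b"
        using K comp_of_insert[where ends=ends and e=e, OF ab aV bV] by simp
      then have "(\<exists>w\<in>K. c (comp_of V ends s w)) \<longleftrightarrow> c (comp_of V ends s a) \<or> c (comp_of V ends s b)"
        by (simp only: bex_Un bex_comp_of[OF aV, where P=c] bex_comp_of[OF bV, where P=c])
      then show ?thesis
        using False K_comp ab by (simp add: merged_label_def push_label_def)
    qed
  qed
qed

lemma killed_iff_merges_labelled:
  assumes "fst (ends e) \<in> V" "snd (ends e) \<in> V"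
  shows "killed V ends s c e \<longleftrightarrow> merges_labelled V ends s c (insert e s)"
proof -
  obtain a b where ab: "ends e = (a, b)" by (cases "ends e")
  with assms have aV: "a \<in> V" and bV: "b \<in> V" by simp_all
  let ?C = "comp_of V ends s" and ?C' = "comp_of V ends (insert e s)" and ?R = "(adj ends s)\<^sup>*"
  note insert_iff = rtrancl_adj_insert_iff[where ends=ends and e=e, OF ab]
  have "(a, b) \<in> (adj ends (insert e s))\<^sup>*"
    by (simp add: insert_iff)
  then have merged: "?C' a = ?C' b"
    by (simp add: comp_of_eq_iff[OF bV])
  have cases: "?C v = ?C a \<and> ?C w = ?C b \<or> ?C v = ?C b \<and> ?C w = ?C a"
    if "v \<in> V" "w \<in> V" "?C' v = ?C' w" "?C v \<noteq> ?C w" for v w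
  proof -
    have "(v, w) \<notin> ?R" "(v, w) \<in> (adj ends (insert e s))\<^sup>*"
      using that by (simp_all add: comp_of_eq_iff[OF that(2)])
    then have "(v, a) \<in> ?R \<and> (b, w) \<in> ?R \<or> (v, b) \<in> ?R \<and> (a, w) \<in> ?R"
      by (simp add: insert_iff)
    then show ?thesis
      using comp_of_eq_iff[OF aV, of ends s v] comp_of_eq_iff[OF bV, of ends s v]
        comp_of_eq_iff[OF that(2), of ends s a] comp_of_eq_iff[OF that(2), of ends s b]
      by auto
  qed
  show ?thesis
  proof
    assume "killed V ends s c e"
    then have "?C a \<noteq> ?C b" "c (?C a)" "c (?C b)"
      using ab by (simp_all add: killed_def)
    then show "merges_labelled V ends s c (insert e s)"
      unfolding merges_labelled_def using aV bV merged by blast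
  next
    assume "merges_labelled V ends s c (insert e s)"
    then obtain v w where "v \<in> V" "w \<in> V" "?C' v = ?C' w" "?C v \<noteq> ?C w" "c (?C v)" "c (?C w)"
      unfolding merges_labelled_def by blast
    with cases[of v w] show "killed V ends s c e"
      unfolding killed_def ab by auto
  qed
qed

lemma push_label_trans:
  assumes "s \<subseteq> t" "t \<subseteq> u"
  shows "push_label V ends t (push_label V ends s c t) u = push_label V ends s c u"
proof
  fix K
  have "(\<exists>w\<in>K. push_label V ends s c t (comp_of V ends t w)) \<longleftrightarrow> (\<exists>x\<in>K. c (comp_of V ends s x))"
    if K: "K \<in> comps V ends u"
  proof
    assume "\<exists>w\<in>K. push_label V ends s c t (comp_of V ends t w)"
    then obtain w x where "w \<in> K" "x \<in> comp_of V ends t w" "c (comp_of V ends s x)"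
      by (auto simp: push_label_def)
    moreover have "comp_of V ends t w \<subseteq> K"
      using comp_of_mono[OF assms(2), of V ends w] comp_of_eq_comps[OF K \<open>w \<in> K\<close>] by simp
    ultimately show "\<exists>x\<in>K. c (comp_of V ends s x)" by blast
  next
    assume "\<exists>x\<in>K. c (comp_of V ends s x)"
    then obtain x where x: "x \<in> K" "c (comp_of V ends s x)" by blast
    have "x \<in> V" using comps_subset[OF K] x(1) by blast
    then have "push_label V ends s c t (comp_of V ends t x)"
      using x(2) in_comp_of_self push_label_comp_of by metis
    then show "\<exists>w\<in>K. push_label V ends s c t (comp_of V ends t w)"
      using x(1) by blast
  qed
  then show "push_label V ends t (push_label V ends s c t) u K = push_label V ends s c u K"
    unfolding push_label_def[of V ends t] push_label_def[of V ends s c u] by blast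
qed

lemma merges_labelled_split:
  assumes "merges_labelled V ends s c u"
  shows "merges_labelled V ends s c t \<or> merges_labelled V ends t (push_label V ends s c t) u"
proof -
  let ?Cs = "comp_of V ends s" and ?Ct = "comp_of V ends t" and ?Cu = "comp_of V ends u"
  obtain v w where vw: "v \<in> V" "w \<in> V" "?Cu v = ?Cu w" "?Cs v \<noteq> ?Cs w" "c (?Cs v)" "c (?Cs w)"
    using assms unfolding merges_labelled_def by blast
  show ?thesis
  proof (cases "?Ct v = ?Ct w")
    case True
    then show ?thesis using vw unfolding merges_labelled_def by blast
  next
    case False
    have "push_label V ends s c t (?Ct v)" "push_label V ends s c t (?Ct w)"
      using vw(5,6) in_comp_of_self[OF vw(1)] in_comp_of_self[OF vw(2)]
      unfolding push_label_comp_of[OF vw(1)] push_label_comp_of[OF vw(2)] by blast+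
    then show ?thesis using vw False unfolding merges_labelled_def by blast
  qed
qed

lemma merges_labelled_mono:
  assumes "t \<subseteq> u" "merges_labelled V ends s c t"
  shows "merges_labelled V ends s c u"
proof -
  let ?Cs = "comp_of V ends s" and ?Ct = "comp_of V ends t" and ?Cu = "comp_of V ends u"
  obtain v w where vw: "v \<in> V" "w \<in> V" "?Ct v = ?Ct w" "?Cs v \<noteq> ?Cs w" "c (?Cs v)" "c (?Cs w)"
    using assms(2) unfolding merges_labelled_def by blast
  moreover have "?Cu v = ?Cu w"
    by (rule comp_of_coarsen[OF assms(1) vw(2,3)])
  ultimately show ?thesis unfolding merges_labelled_def by blast
qed

lemma merges_labelled_push_label:
  assumes "s \<subseteq> t" "t \<subseteq> u" "merges_labelled V ends t (push_label V ends s c t) u"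
  shows "merges_labelled V ends s c u"
proof -
  let ?Cs = "comp_of V ends s" and ?Ct = "comp_of V ends t" and ?Cu = "comp_of V ends u"
  obtain v w where vw: "v \<in> V" "w \<in> V" "?Cu v = ?Cu w" "?Ct v \<noteq> ?Ct w"
    "push_label V ends s c t (?Ct v)" "push_label V ends s c t (?Ct w)"
    using assms(3) unfolding merges_labelled_def by blast
  then obtain x y where x: "x \<in> ?Ct v" "c (?Cs x)" and y: "y \<in> ?Ct w" "c (?Cs y)"
    by (auto simp: push_label_comp_of)
  have xV: "x \<in> V" and yV: "y \<in> V"
    using x(1) y(1) comp_of_subset[of V ends t] by blast+
  have "?Cu x = ?Cu y"
    using comp_of_superset_eq[OF assms(2) x(1)] comp_of_superset_eq[OF assms(2) y(1)] vw(3) by simp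
  moreover have "?Cs x \<noteq> ?Cs y"
  proof
    assume "?Cs x = ?Cs y"
    then have "?Ct x = ?Ct y" by (rule comp_of_coarsen[OF assms(1) yV])
    then show False using comp_of_eq[OF x(1)] comp_of_eq[OF y(1)] vw(4) by simp
  qed
  ultimately show ?thesis using xV yV x(2) y(2) unfolding merges_labelled_def by blast
qed

lemma merges_labelled_trans:
  assumes "s \<subseteq> t" "t \<subseteq> u"
  shows "merges_labelled V ends s c u \<longleftrightarrow>
    merges_labelled V ends s c t \<or> merges_labelled V ends t (push_label V ends s c t) u"
  using assms merges_labelled_split merges_labelled_mono merges_labelled_push_label by metis

lemma merge_two_edges:
  assumes "fst (ends e) \<in> V" "snd (ends e) \<in> V" "fst (ends f) \<in> V" "snd (ends f) \<in> V"
  shows "killed V ends s c e \<or> killed V ends (insert e s) (merged_label V ends s c e) f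
      \<longleftrightarrow> merges_labelled V ends s c (insert f (insert e s))"
    and "merged_label V ends (insert e s) (merged_label V ends s c e) f
      = push_label V ends s c (insert f (insert e s))"
  using assms merges_labelled_trans[of s "insert e s" "insert f (insert e s)" V ends c]
    push_label_trans[of s "insert e s" "insert f (insert e s)" V ends c]
  by (auto simp: killed_iff_merges_labelled merged_label_eq_push_label)

lemma finite_enh_states:
  assumes "finite V" "finite E"
  shows "finite (enh_states V E ends)"
proof -
  have "enh_states V E ends \<subseteq> Pow E \<times> (\<lambda>A K. K \<in> A) ` Pow (Pow V)"
  proof
    fix S
    assume S: "S \<in> enh_states V E ends"
    obtain s c where Sd: "S = (s, c)" by (cases S)
    have "{K. c K} \<subseteq> Pow V"
      using S comps_subset unfolding Sd enh_states_def by blast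
    moreover have "c = (\<lambda>K. K \<in> {K. c K})" by simp
    ultimately have "c \<in> (\<lambda>A K. K \<in> A) ` Pow (Pow V)" by blast
    then show "S \<in> Pow E \<times> (\<lambda>A K. K \<in> A) ` Pow (Pow V)"
      using S unfolding Sd enh_states_def by simp
  qed
  then show ?thesis
    using assms by (simp add: finite_subset)
qed

lemma merged_state_in_enh_states:
  "e \<in> E \<Longrightarrow> s \<subseteq> E \<Longrightarrow> (insert e s, merged_label V ends s c e) \<in> enh_states V E ends"
  by (auto simp: enh_states_def merged_label_def)

lemma dstate_nonzeroD:
  "dstate V E ends lo (s, c) T \<noteq> 0 \<Longrightarrow>
    \<exists>e\<in>E - s. \<not> killed V ends s c e \<and> T = (insert e s, merged_label V ends s c e)"
proof (rule ccontr)
  assume "dstate V E ends lo (s, c) T \<noteq> 0"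
    and "\<not> (\<exists>e\<in>E - s. \<not> killed V ends s c e \<and> T = (insert e s, merged_label V ends s c e))"
  then show False unfolding dstate_def by (auto intro: sum.neutral)
qed

lemma sum_dstate_mult:
  assumes "finite V" "finite E" "s \<subseteq> E"
  shows "(\<Sum>S'\<in>enh_states V E ends. dstate V E ends lo (s, c) S' * g S') =
    (\<Sum>e\<in>E - s. if \<not> killed V ends s c e
      then (-1) ^ edge_pos lo s e * g (insert e s, merged_label V ends s c e) else 0)"
proof -
  let ?X = "\<lambda>e. (insert e s, merged_label V ends s c e)"
  let ?a = "\<lambda>e. if \<not> killed V ends s c e then (-1) ^ edge_pos lo s e * g (?X e) else 0"
  have "(\<Sum>S'\<in>enh_states V E ends. dstate V E ends lo (s, c) S' * g S')
      = (\<Sum>S'\<in>enh_states V E ends. \<Sum>e\<in>E - s. if ?X e = S' then ?a e else 0)"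
    unfolding dstate_def by (auto simp: sum_distrib_right intro!: sum.cong)
  also have "\<dots> = (\<Sum>e\<in>E - s. \<Sum>S'\<in>enh_states V E ends. if ?X e = S' then ?a e else 0)"
    by (rule sum.swap)
  also have "\<dots> = (\<Sum>e\<in>E - s. ?a e)"
  proof (rule sum.cong[OF refl])
    fix e assume "e \<in> E - s"
    then have "?X e \<in> enh_states V E ends"
      using assms(3) by (simp add: merged_state_in_enh_states)
    then show "(\<Sum>S'\<in>enh_states V E ends. if ?X e = S' then ?a e else 0) = ?a e"
      using finite_enh_states[OF assms(1,2)] by simp
  qed
  finally show ?thesis .
qed

lemma edge_pos_insert:
  assumes "finite s" "e \<notin> s"
  shows "edge_pos lo (insert e s) f = edge_pos lo s f + (if (e, f) \<in> lo then 1 else 0)"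
proof (cases "(e, f) \<in> lo")
  case True
  then have "{e' \<in> insert e s. (e', f) \<in> lo} = insert e {e' \<in> s. (e', f) \<in> lo}" by auto
  then show ?thesis using True assms unfolding edge_pos_def by simp
next
  case False
  then have "{e' \<in> insert e s. (e', f) \<in> lo} = {e' \<in> s. (e', f) \<in> lo}" by auto
  then show ?thesis using False unfolding edge_pos_def by simp
qed

lemma strict_linear_order_on_asym_iff:
  assumes "strict_linear_order_on E lo" "e \<in> E" "f \<in> E" "e \<noteq> f"
  shows "(f, e) \<in> lo \<longleftrightarrow> (e, f) \<notin> lo"
  using assms unfolding strict_linear_order_on_def total_on_def irrefl_def trans_def by blast

lemma edge_pos_swap_sign:
  assumes "strict_linear_order_on E lo" "finite s" "e \<in> E - s" "f \<in> E - s" "e \<noteq> f"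
  shows "(-1::int) ^ (edge_pos lo s f + edge_pos lo (insert f s) e)
    = - ((-1) ^ (edge_pos lo s e + edge_pos lo (insert e s) f))"
  using assms strict_linear_order_on_asym_iff[OF assms(1), of e f]
  by (simp add: edge_pos_insert power_add)

lemma sum_offdiag_antisym:
  fixes H :: "'a \<Rightarrow> 'a \<Rightarrow> 'b::linordered_ab_group_add"
  assumes "finite A" "\<And>e f. e \<in> A \<Longrightarrow> f \<in> A \<Longrightarrow> e \<noteq> f \<Longrightarrow> H f e = - H e f"
  shows "(\<Sum>e\<in>A. \<Sum>f\<in>A - {e}. H e f) = 0"
proof -
  let ?M = "\<lambda>e f. if e = f then 0 else H e f"
  have "(\<Sum>e\<in>A. \<Sum>f\<in>A - {e}. H e f) = (\<Sum>e\<in>A. \<Sum>f\<in>A. ?M e f)"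
    using assms(1) by (simp add: sum.If_cases Diff_eq)
  also have "\<dots> = (\<Sum>f\<in>A. \<Sum>e\<in>A. ?M e f)"
    by (rule sum.swap)
  also have "\<dots> = (\<Sum>f\<in>A. \<Sum>e\<in>A. - ?M f e)"
  proof (intro sum.cong refl)
    fix f e
    assume "f \<in> A" "e \<in> A"
    then show "?M e f = - ?M f e"
      using assms(2)[of f e] by (cases "e = f") simp_all
  qed
  also have "\<dots> = - (\<Sum>e\<in>A. \<Sum>f\<in>A. ?M e f)"
    by (simp add: sum_negf)
  finally show ?thesis
    using assms(1) by (simp add: sum.If_cases Diff_eq equal_neg_zero)
qed

lemma dstate_two_steps:
  assumes ends: "\<forall>e\<in>E. fst (ends e) \<in> V \<and> snd (ends e) \<in> V" and e: "e \<in> E - s"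
  shows "(if \<not> killed V ends s c e
      then (-1) ^ edge_pos lo s e * dstate V E ends lo (insert e s, merged_label V ends s c e) T else 0)
    = (\<Sum>f\<in>E - s - {e}. if \<not> merges_labelled V ends s c (insert f (insert e s))
        \<and> T = (insert f (insert e s), push_label V ends s c (insert f (insert e s)))
      then (-1) ^ (edge_pos lo s e + edge_pos lo (insert e s) f) else 0)"
    (is "_ = sum ?h _")
proof -
  let ?c = "merged_label V ends s c e"
  have "E - insert e s = E - s - {e}" by blast
  then have "(if \<not> killed V ends s c e
      then (-1) ^ edge_pos lo s e * dstate V E ends lo (insert e s, ?c) T else 0)
    = (\<Sum>f\<in>E - s - {e}. if \<not> killed V ends s c e then (-1) ^ edge_pos lo s e *
        (if \<not> killed V ends (insert e s) ?c f
            \<and> T = (insert f (insert e s), merged_label V ends (insert e s) ?c f)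
         then (-1) ^ edge_pos lo (insert e s) f else 0) else 0)"
    by (simp add: dstate_def sum_distrib_left)
  also have "\<dots> = sum ?h (E - s - {e})"
    using ends e merge_two_edges[where e=e and s=s and c=c and V=V and ends=ends]
    by (intro sum.cong refl) (auto simp: power_add)
  finally show ?thesis .
qed

lemma dstate_dstate_sum_eq_0:
  assumes fin: "finite V" "finite E" and ends: "\<forall>e\<in>E. fst (ends e) \<in> V \<and> snd (ends e) \<in> V"
    and lo: "strict_linear_order_on E lo" and s: "s \<subseteq> E"
  shows "(\<Sum>S'\<in>enh_states V E ends. dstate V E ends lo (s, c) S' * dstate V E ends lo S' T) = 0"
proof -
  define H where "H e f = (if \<not> merges_labelled V ends s c (insert f (insert e s))
      \<and> T = (insert f (insert e s), push_label V ends s c (insert f (insert e s)))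
    then (-1::int) ^ (edge_pos lo s e + edge_pos lo (insert e s) f) else 0)" for e f
  have "(\<Sum>S'\<in>enh_states V E ends. dstate V E ends lo (s, c) S' * dstate V E ends lo S' T)
      = (\<Sum>e\<in>E - s. \<Sum>f\<in>E - s - {e}. H e f)"
    unfolding sum_dstate_mult[OF fin s] H_def using dstate_two_steps[OF ends]
    by (intro sum.cong refl) blast
  also have "\<dots> = 0"
  proof (rule sum_offdiag_antisym)
    show "finite (E - s)" using fin(2) by simp
  next
    fix e f
    assume "e \<in> E - s" "f \<in> E - s" "e \<noteq> f"
    note sign = edge_pos_swap_sign[OF lo finite_subset[OF s fin(2)] this]
    show "H f e = - H e f"
      unfolding H_def insert_commute[of e f s] sign by simp
  qed
  finally show ?thesis .
qed

lemma dmap_dmap_eq_0: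
  assumes "finite V" "finite E" "\<forall>e\<in>E. fst (ends e) \<in> V \<and> snd (ends e) \<in> V"
    and "strict_linear_order_on E lo"
  shows "dmap V E ends lo (dmap V E ends lo z) = (\<lambda>_. 0)"
proof
  fix T
  let ?en = "enh_states V E ends" and ?d = "dstate V E ends lo"
  have "dmap V E ends lo (dmap V E ends lo z) T = (\<Sum>S'\<in>?en. \<Sum>S\<in>?en. z S * (?d S S' * ?d S' T))"
    unfolding dmap_def by (simp add: sum_distrib_right mult.assoc)
  also have "\<dots> = (\<Sum>S\<in>?en. z S * (\<Sum>S'\<in>?en. ?d S S' * ?d S' T))"
    by (subst sum.swap) (simp add: sum_distrib_left)
  also have "\<dots> = 0"
  proof (rule sum.neutral, rule ballI)
    fix S
    assume "S \<in> ?en"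
    then obtain s c where "S = (s, c)" "s \<subseteq> E"
      unfolding enh_states_def by blast
    then show "z S * (\<Sum>S'\<in>?en. ?d S S' * ?d S' T) = 0"
      using dstate_dstate_sum_eq_0[OF assms] by simp
  qed
  finally show "dmap V E ends lo (dmap V E ends lo z) T = 0" .
qed

lemma balanced_mono: "balanced ends \<sigma> t \<Longrightarrow> s \<subseteq> t \<Longrightarrow> balanced ends \<sigma> s"
  unfolding balanced_def by blast

lemma dstate_nonzero_subset: "dstate V E ends lo S T \<noteq> 0 \<Longrightarrow> fst S \<subseteq> fst T"
  by (cases S) (auto dest: dstate_nonzeroD)

lemma fb_dmap_fb: "fb ends \<sigma> (dmap V E ends lo (fb ends \<sigma> z)) = fb ends \<sigma> (dmap V E ends lo z)"
proof
  fix T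
  show "fb ends \<sigma> (dmap V E ends lo (fb ends \<sigma> z)) T = fb ends \<sigma> (dmap V E ends lo z) T"
  proof (cases "balanced ends \<sigma> (fst T)")
    case True
    have "fb ends \<sigma> z S * dstate V E ends lo S T = z S * dstate V E ends lo S T" for S
    proof (cases "dstate V E ends lo S T = 0")
      case False
      then have "balanced ends \<sigma> (fst S)"
        using balanced_mono[OF True dstate_nonzero_subset] by blast
      then show ?thesis by (simp add: fb_def)
    qed simp
    then have "dmap V E ends lo (fb ends \<sigma> z) T = dmap V E ends lo z T"
      unfolding dmap_def by (simp only:)
    then show ?thesis by (simp add: fb_def)
  qed (simp add: fb_def)
qed

lemma dmap_nonzeroD:
  "dmap V E ends lo z T \<noteq> 0 \<Longrightarrow> \<exists>S\<in>enh_states V E ends. z S \<noteq> 0 \<and> dstate V E ends lo S T \<noteq> 0"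
proof (rule ccontr)
  assume "dmap V E ends lo z T \<noteq> 0"
    and "\<not> (\<exists>S\<in>enh_states V E ends. z S \<noteq> 0 \<and> dstate V E ends lo S T \<noteq> 0)"
  then show False unfolding dmap_def by (auto intro: sum.neutral)
qed

lemma dmap_in_C_grp:
  assumes "finite E" "z \<in> C_grp V E ends i"
  shows "dmap V E ends lo z \<in> C_grp V E ends (Suc i)"
  unfolding C_grp_def
proof (intro CollectI allI impI)
  fix T
  assume "dmap V E ends lo z T \<noteq> 0"
  then obtain s c where S: "(s, c) \<in> enh_states V E ends" "z (s, c) \<noteq> 0"
    and "dstate V E ends lo (s, c) T \<noteq> 0"
    using dmap_nonzeroD by fastforce
  then obtain e where "e \<in> E - s" "T = (insert e s, merged_label V ends s c e)"
    using dstate_nonzeroD by blast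
  moreover have "s \<subseteq> E" "card s = i"
    using S assms(2) unfolding enh_states_def C_grp_def by auto
  moreover have "finite s"
    using \<open>s \<subseteq> E\<close> assms(1) by (rule finite_subset)
  ultimately show "T \<in> enh_states V E ends \<and> card (fst T) = Suc i"
    by (simp add: merged_state_in_enh_states)
qed

lemma fb_in_Cb_grp: "z \<in> C_grp V E ends i \<Longrightarrow> fb ends \<sigma> z \<in> Cb_grp V E ends \<sigma> i"
  unfolding Cb_grp_def C_grp_def fb_def by auto

theorem mainTheorem9:
  fixes V :: "'v set" and E :: "'e set" and ends :: "'e \<Rightarrow> 'v \<times> 'v"
    and \<sigma> :: "'e \<Rightarrow> int" and lo :: "('e \<times> 'e) set" and i :: nat
  assumes "finite V" and "finite E"
    and "\<forall>e\<in>E. fst (ends e) \<in> V \<and> snd (ends e) \<in> V"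
    and "\<forall>e\<in>E. \<sigma> e = 1 \<or> \<sigma> e = -1"
    and "strict_linear_order_on E lo"
  shows "(\<forall>z \<in> C_grp V E ends i. fb ends \<sigma> z = (\<lambda>_. 0) \<longrightarrow>
            fb ends \<sigma> (dmap V E ends lo z) = (\<lambda>_. 0))
       \<and> (\<forall>z \<in> Cb_grp V E ends \<sigma> i. db V E ends \<sigma> lo z \<in> Cb_grp V E ends \<sigma> (Suc i))
       \<and> (\<forall>z \<in> C_grp V E ends i. db V E ends \<sigma> lo (fb ends \<sigma> z) = fb ends \<sigma> (dmap V E ends lo z))
       \<and> (\<forall>z \<in> Cb_grp V E ends \<sigma> i. db V E ends \<sigma> lo (db V E ends \<sigma> lo z) = (\<lambda>_. 0))"
proof (intro conjI ballI impI)
  fix z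
  assume "fb ends \<sigma> z = (\<lambda>_. 0)"
  then show "fb ends \<sigma> (dmap V E ends lo z) = (\<lambda>_. 0)"
    using fb_dmap_fb[of ends \<sigma> V E lo z] by (simp add: dmap_def fb_def)
next
  fix z
  assume "z \<in> Cb_grp V E ends \<sigma> i"
  then have "z \<in> C_grp V E ends i" by (simp add: Cb_grp_def)
  then have "dmap V E ends lo z \<in> C_grp V E ends (Suc i)"
    by (rule dmap_in_C_grp[OF assms(2)])
  then show "db V E ends \<sigma> lo z \<in> Cb_grp V E ends \<sigma> (Suc i)"
    unfolding db_def by (rule fb_in_Cb_grp)
next
  fix z
  show "db V E ends \<sigma> lo (fb ends \<sigma> z) = fb ends \<sigma> (dmap V E ends lo z)"
    unfolding db_def by (rule fb_dmap_fb)
next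
  fix z
  show "db V E ends \<sigma> lo (db V E ends \<sigma> lo z) = (\<lambda>_. 0)"
    unfolding db_def fb_dmap_fb dmap_dmap_eq_0[OF assms(1,2,3,5)] by (simp add: fb_def)
qed

end
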